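(* Consider the asynchronous $(n,k)$ game on the complete graph with agent set $[n]$ consisting of $n_r$ rejectors, $n_c$ consentors and at least two majority followers, with threshold $n_c<k\le n-n_r$. Let $T=\inf\{t\ge0:\ x_i(t)=x_i(s)\text{ for all } i\in[n]\text{ and all } s\ge t\}$. Then on the event that a decision is never made in finite time (i.e. $\sum_{i\in[n]}x_i(t)<k$ for all $t\ge0$), all majority followers hold opinion $0$ at time $T$.
   Context: Each agent $i\in[n]$ holds an opinion $x_i(t)\in\{0,1\}$ at time $t=0,1,2,\dots$. The social graph is complete: every agent's social neighbors are all the other $n-1$ agents. In the $(n,k)$ game a decision is made at time $t$ if $\sum_{i\in[n]}x_i(t)\ge k$. The game is asynchronous: at each time step a single agent, chosen uniformly at random from $[n]$ (independently of the past), updates its opinion, and all other opinions stay the same. A rejector holds opinion $0$ at all times; a consentor holds opinion $1$ at all times. A majority follower has initial opinion distributed as Bernoulli$(1/2)$ (independently across agents), and when it updates it adopts the majority opinion among its social neighbors (the other $n-1$ agents). *)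

theory Defs
  imports "HOL-Probability.Probability"
begin

text \<open>Agents are 0,...,n-1; an opinion profile is a map nat => bool (True = opinion 1).
  R = rejectors, C = consentors, F = majority followers.\<close>

definition ones :: "nat \<Rightarrow> (nat \<Rightarrow> bool) \<Rightarrow> nat" where
  "ones n x = card {i. i < n \<and> x i}"

definition majority_update :: "nat \<Rightarrow> (nat \<Rightarrow> bool) \<Rightarrow> nat \<Rightarrow> bool" where
  "majority_update n x i =
     (let c = card {j. j < n \<and> j \<noteq> i \<and> x j}
      in if 2 * c > n - 1 then True else if 2 * c < n - 1 then False else x i)"

definition game_step :: "nat \<Rightarrow> nat set \<Rightarrow> nat set \<Rightarrow> (nat \<Rightarrow> bool) \<Rightarrow> nat \<Rightarrow> (nat \<Rightarrow> bool)" where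
  "game_step n R C x i =
     x(i := (if i \<in> R then False else if i \<in> C then True else majority_update n x i))"

definition init_profile :: "nat set \<Rightarrow> nat set \<Rightarrow> (nat \<Rightarrow> bool) \<Rightarrow> (nat \<Rightarrow> bool)" where
  "init_profile R C b = (\<lambda>i. if i \<in> R then False else if i \<in> C then True else b i)"

fun opinions :: "nat \<Rightarrow> nat set \<Rightarrow> nat set \<Rightarrow> (nat \<Rightarrow> bool) \<Rightarrow> nat stream \<Rightarrow> nat \<Rightarrow> (nat \<Rightarrow> bool)" where
  "opinions n R C b s 0 = init_profile R C b"
| "opinions n R C b s (Suc t) = game_step n R C (opinions n R C b s t) (s !! t)"

text \<open>Set of times after which no opinion changes any more; T is its infimum.\<close>
definition stable_times :: "nat \<Rightarrow> (nat \<Rightarrow> nat \<Rightarrow> bool) \<Rightarrow> nat set" where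
  "stable_times n x = {t. \<forall>i<n. \<forall>s\<ge>t. x s i = x t i}"

definition game_space :: "nat \<Rightarrow> nat set \<Rightarrow> ((nat \<Rightarrow> bool) \<times> nat stream) measure" where
  "game_space n F = pair_measure (PiM F (\<lambda>_. measure_pmf (bernoulli_pmf (1/2))))
                                 (stream_space (measure_pmf (pmf_of_set {..<n})))"

end

theory Submission
  imports Defs
begin

text \<open>Almost surely every agent updates infinitely often. On the complete graph an updating
  follower adopts the strict majority of all n opinions, its own included, and flips its opinion
  on an exact tie. So a strict majority for v is never lost, and once every follower has updated
  after it formed, all followers hold v forever. A strict majority forms at the latest right after
  the first update of a follower, which breaks any tie. Since no decision is ever made, some follower
  always holds 0, hence v = 0 and the followers' final opinions are all 0.\<close>

definition supporters :: "nat \<Rightarrow> (nat \<Rightarrow> bool) \<Rightarrow> bool \<Rightarrow> nat" where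
  "supporters n x v = card {i. i < n \<and> x i = v}"

lemma ones_le: "ones n x \<le> n"
  unfolding ones_def by (rule card_mono[of "{..<n}", simplified]) auto

lemma supporters_True: "supporters n x True = ones n x"
  by (simp add: supporters_def ones_def)

lemma supporters_False: "supporters n x False = n - ones n x"
proof -
  have "{i. i < n \<and> x i = False} = {..<n} - {i. i < n \<and> x i}" by auto
  then show ?thesis by (simp add: supporters_def ones_def card_Diff_subset subset_eq)
qed

lemma strict_majority_if_not_tied:
  assumes "2 * ones n x \<noteq> n"
  shows "\<exists>v. n < 2 * supporters n x v"
proof (cases "n < 2 * ones n x")
  case True
  then show ?thesis by (metis supporters_True)
next
  case False
  then have "n < 2 * supporters n x False"
    using assms ones_le[of n x] by (simp add: supporters_False)
  then show ?thesis ..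
qed

text \<open>The definition counts only the other agents; this is the rule in terms of all n of them.\<close>

lemma majority_update_eq:
  assumes "i < n"
  shows "majority_update n x i = (if 2 * ones n x = n then \<not> x i else n < 2 * ones n x)"
proof -
  have "{j. j < n \<and> j \<noteq> i \<and> x j} = {j. j < n \<and> x j} - {i}" by auto
  then have others: "card {j. j < n \<and> j \<noteq> i \<and> x j} = ones n x - (if x i then 1 else 0)"
    using assms by (simp add: ones_def card_Diff_singleton_if)
  have "x i \<Longrightarrow> 0 < ones n x"
    using assms unfolding ones_def by (subst card_gt_0_iff) auto
  then show ?thesis
    using assms unfolding majority_update_def Let_def others by auto
qed

lemma majority_update_strict_majority:
  assumes "i < n" and "n < 2 * supporters n x v"
  shows "majority_update n x i = v"
  using assms ones_le[of n x]
  by (cases v) (auto simp: majority_update_eq supporters_True supporters_False)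

lemma ones_flip:
  assumes "i < n"
  shows "ones n (x(i := \<not> x i)) \<noteq> ones n x"
proof -
  let ?S = "{j. j < n \<and> x j}"
  have fin: "finite ?S" by simp
  show ?thesis
  proof (cases "x i")
    case True
    moreover have "{j. j < n \<and> (x(i := \<not> x i)) j} = ?S - {i}" using True by auto
    moreover have "i \<in> ?S" using True assms by simp
    ultimately show ?thesis using fin unfolding ones_def by (metis card_Diff1_less less_irrefl)
  next
    case False
    then have "{j. j < n \<and> (x(i := \<not> x i)) j} = insert i ?S" using assms by auto
    then show ?thesis using False fin unfolding ones_def by simp
  qed
qed

definition fair_schedule :: "nat \<Rightarrow> nat stream \<Rightarrow> bool" where
  "fair_schedule n s \<longleftrightarrow> (\<forall>i<n. \<forall>t0. \<exists>t\<ge>t0. s !! t = i)"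

lemma Inf_stable_times:
  assumes "T \<in> stable_times n y" and "i < n"
  shows "y (Inf (stable_times n y)) i = y T i"
proof -
  have "Inf (stable_times n y) \<in> stable_times n y"
    using assms(1) by (intro Inf_nat_def1) auto
  moreover have "Inf (stable_times n y) \<le> T"
    using assms(1) by (rule cInf_lower) simp
  ultimately have "y T i = y (Inf (stable_times n y)) i"
    using assms(2) unfolding stable_times_def by blast
  then show ?thesis ..
qed

locale majority_game =
  fixes n :: nat and R C F :: "nat set" and b :: "nat \<Rightarrow> bool" and s :: "nat stream"
  assumes agents: "R \<union> C \<union> F = {..<n}"
    and disjoint: "R \<inter> C = {}" "R \<inter> F = {}" "C \<inter> F = {}"
begin

abbreviation x :: "nat \<Rightarrow> nat \<Rightarrow> bool" where
  "x \<equiv> opinions n R C b s"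

lemma rejector_opinion: "i \<in> R \<Longrightarrow> \<not> x t i"
  by (induction t) (auto simp: game_step_def init_profile_def)

lemma consentor_opinion: "i \<in> C \<Longrightarrow> x t i"
  using disjoint(1) by (induction t) (auto simp: game_step_def init_profile_def)

lemma opinions_Suc_other: "j \<noteq> s !! t \<Longrightarrow> x (Suc t) j = x t j"
  by (simp add: game_step_def)

lemma opinions_Suc_follower:
  assumes "s !! t \<in> F"
  shows "x (Suc t) = (x t)(s !! t := majority_update n (x t) (s !! t))"
  using assms disjoint by (auto simp: game_step_def)

lemma follower_in_range: "i \<in> F \<Longrightarrow> i < n"
  using agents by auto

lemma follower_adopts_strict_majority:
  assumes "s !! t \<in> F" and "n < 2 * supporters n (x t) v"
  shows "x (Suc t) (s !! t) = v"
  unfolding opinions_Suc_follower[OF assms(1)]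
  using assms by (simp add: majority_update_strict_majority follower_in_range)

lemma follower_flips_on_tie:
  assumes "s !! t \<in> F" and "2 * ones n (x t) = n"
  shows "x (Suc t) = (x t)(s !! t := \<not> x t (s !! t))"
  unfolding opinions_Suc_follower[OF assms(1)]
  using assms by (simp add: majority_update_eq follower_in_range)

lemma strict_majority_step:
  assumes "n < 2 * supporters n (x t) v"
  shows "n < 2 * supporters n (x (Suc t)) v"
proof -
  have "x (Suc t) j = v" if "j < n" and "x t j = v" for j
  proof (cases "j = s !! t")
    case True
    consider "j \<in> R" | "j \<in> C" | "j \<in> F"
      using agents \<open>j < n\<close> by auto
    then show ?thesis
    proof cases
      case 1
      then show ?thesis using that(2) rejector_opinion[of j t] rejector_opinion[of j "Suc t"] by blast
    next
      case 2
      then show ?thesis using that(2) consentor_opinion[of j t] consentor_opinion[of j "Suc t"] by blast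
    next
      case 3
      then show ?thesis using True assms follower_adopts_strict_majority by blast
    qed
  next
    case False
    then show ?thesis using that(2) opinions_Suc_other[of j t] by simp
  qed
  then have "supporters n (x t) v \<le> supporters n (x (Suc t)) v"
    unfolding supporters_def by (intro card_mono) auto
  with assms show ?thesis by linarith
qed

lemma strict_majority_persists:
  assumes "n < 2 * supporters n (x t0) v" and "t0 \<le> t"
  shows "n < 2 * supporters n (x t) v"
  using assms(2)
proof (induction rule: dec_induct)
  case base
  show ?case using assms(1) .
next
  case (step m)
  from step.IH show ?case by (rule strict_majority_step)
qed

lemma strict_majority_absorbs:
  assumes "n < 2 * supporters n (x t0) v" and "t0 \<le> t1" and "s !! t1 \<in> F" and "t1 \<le> t"
  shows "x (Suc t) (s !! t1) = v"
  using assms(4)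
proof (induction rule: dec_induct)
  case base
  show ?case
    using assms(3) strict_majority_persists[OF assms(1,2)] by (rule follower_adopts_strict_majority)
next
  case (step m)
  show ?case
  proof (cases "s !! Suc m = s !! t1")
    case True
    have "t0 \<le> Suc m" using assms(2) step.hyps by simp
    with assms(1) have "n < 2 * supporters n (x (Suc m)) v" by (rule strict_majority_persists)
    with assms(3) show ?thesis
      unfolding True[symmetric] by (rule follower_adopts_strict_majority)
  next
    case False
    then show ?thesis using step.IH opinions_Suc_other[of "s !! t1" "Suc m"] by simp
  qed
qed

lemma consensus_after_strict_majority:
  assumes "fair_schedule n s" and "n < 2 * supporters n (x t0) v"
  obtains T where "\<forall>t\<ge>T. \<forall>i\<in>F. x t i = v"
proof -
  have "\<exists>t1\<ge>t0. s !! t1 = i" if "i \<in> F" for i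
    using assms(1) follower_in_range[OF that] unfolding fair_schedule_def by blast
  then obtain g where g: "\<And>i. i \<in> F \<Longrightarrow> t0 \<le> g i \<and> s !! g i = i" by metis
  have "finite F"
    by (rule finite_subset[of F "{..<n}"]) (auto dest: follower_in_range)
  have "x t i = v" if i: "i \<in> F" and late: "Suc (Max (g ` F)) \<le> t" for i t
  proof -
    have "g i \<le> Max (g ` F)" using \<open>finite F\<close> i by simp
    then obtain t' where "t = Suc t'" and "g i \<le> t'" using late by (cases t) auto
    then show ?thesis
      using strict_majority_absorbs[OF assms(2), of "g i" t'] g[OF i] i by simp
  qed
  then show ?thesis using that by blast
qed

lemma strict_majority_reached:
  assumes "fair_schedule n s" and "F \<noteq> {}"
  obtains t v where "n < 2 * supporters n (x t) v"
proof -
  obtain i where "i \<in> F" using assms(2) by blast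
  then obtain t where t: "s !! t = i"
    using assms(1) follower_in_range unfolding fair_schedule_def by blast
  have "\<exists>t'. 2 * ones n (x t') \<noteq> n"
  proof (cases "2 * ones n (x t) = n")
    case True
    with \<open>i \<in> F\<close> t have "x (Suc t) = (x t)(i := \<not> x t i)"
      using follower_flips_on_tie by blast
    then have "ones n (x (Suc t)) \<noteq> ones n (x t)"
      by (simp only: ones_flip[OF follower_in_range[OF \<open>i \<in> F\<close>]] not_False_eq_True)
    with True show ?thesis by (intro exI[of _ "Suc t"]) linarith
  qed blast
  then show ?thesis using strict_majority_if_not_tied that by blast
qed

lemma follower_dissents:
  assumes "ones n (x t) < n - card R"
  shows "\<exists>i\<in>F. \<not> x t i"
proof (rule ccontr)
  assume "\<not> ?thesis"
  then have "C \<union> F \<subseteq> {i. i < n \<and> x t i}"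
    using agents consentor_opinion by auto
  then have "card (C \<union> F) \<le> ones n (x t)"
    unfolding ones_def by (intro card_mono) auto
  moreover have "C \<union> F = {..<n} - R" and "R \<subseteq> {..<n}"
    using agents disjoint by auto
  then have "card (C \<union> F) = n - card R"
    by (simp add: card_Diff_subset finite_subset)
  ultimately show False using assms by linarith
qed

lemma stable_after_consensus:
  assumes "\<forall>t\<ge>T. \<forall>i\<in>F. x t i = v"
  shows "T \<in> stable_times n x"
  unfolding stable_times_def
proof (intro CollectI allI impI)
  fix i t assume "i < n" and "T \<le> t"
  then consider "i \<in> R" | "i \<in> C" | "i \<in> F" using agents by auto
  then show "x t i = x T i"
    using assms \<open>T \<le> t\<close> rejector_opinion consentor_opinion by cases blast+
qed

lemma followers_reject_when_undecided:
  assumes "fair_schedule n s" and "F \<noteq> {}" and "\<forall>t. ones n (x t) < n - card R"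
  shows "stable_times n x \<noteq> {} \<and> (\<forall>i\<in>F. \<not> x (Inf (stable_times n x)) i)"
proof -
  obtain t0 v where "n < 2 * supporters n (x t0) v"
    using strict_majority_reached[OF assms(1,2)] .
  then obtain T where consensus: "\<forall>t\<ge>T. \<forall>i\<in>F. x t i = v"
    using consensus_after_strict_majority[OF assms(1)] by blast
  then have "\<not> v"
    using follower_dissents[of T] assms(3) by blast
  have stable: "T \<in> stable_times n x"
    using consensus by (rule stable_after_consensus)
  have "\<not> x (Inf (stable_times n x)) i" if "i \<in> F" for i
    using Inf_stable_times[OF stable follower_in_range[OF that]] consensus that \<open>\<not> v\<close> by simp
  then show ?thesis using stable by blast
qed

end

text \<open>Conditioning on the first letter, the probability p of never meeting A satisfies
  p = p (1 - prob A), so p = 0; shifting the stream gives the same for every tail.\<close>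

lemma (in prob_space) AE_stream_space_infinitely_often:
  assumes [measurable]: "A \<in> sets M" and "prob A \<noteq> 0"
  shows "AE \<omega> in stream_space M. \<forall>t0. \<exists>t\<ge>t0. \<omega> !! t \<in> A"
proof -
  interpret S: prob_space "stream_space M" by (rule prob_space_stream_space)
  define p where "p = S.prob {\<omega> \<in> space (stream_space M). \<forall>t. \<omega> !! t \<notin> A}"
  have miss_first: "(\<forall>t. (a ## \<omega>) !! t \<notin> A) \<longleftrightarrow> a \<notin> A \<and> (\<forall>t. \<omega> !! t \<notin> A)" for a \<omega>
    by (auto simp: Stream_snth split: nat.splits)
  have "ennreal p = (\<integral>\<^sup>+a. \<P>(\<omega> in stream_space M. \<forall>t. (a ## \<omega>) !! t \<notin> A) \<partial>M)"
    unfolding p_def by (rule prob_stream_space) measurable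
  also have "\<dots> = (\<integral>\<^sup>+a. ennreal p * indicator (space M - A) a \<partial>M)"
    by (intro nn_integral_cong) (auto simp: miss_first p_def indicator_def)
  also have "\<dots> = ennreal p * emeasure M (space M - A)"
    by (rule nn_integral_cmult_indicator) simp
  also have "\<dots> = ennreal (p * (1 - prob A))"
    by (simp add: emeasure_eq_measure prob_compl ennreal_mult p_def)
  finally have "p = p * (1 - prob A)"
    by (subst (asm) ennreal_inj) (auto simp: p_def)
  then have "p = 0" using assms(2) by (simp add: algebra_simps)
  then have hit: "AE \<omega> in stream_space M. \<exists>t. \<omega> !! t \<in> A"
    unfolding p_def by (subst (asm) S.prob_eq_0) (auto elim: eventually_mono)
  have "AE \<omega> in stream_space M. \<exists>t\<ge>t0. \<omega> !! t \<in> A" for t0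
  proof (induction t0)
    case 0
    from hit show ?case by simp
  next
    case (Suc t0)
    have "AE \<omega> in stream_space M. \<exists>t\<ge>Suc t0. (a ## \<omega>) !! t \<in> A" for a
      using Suc by (rule eventually_mono) (auto intro: Suc_le_mono[THEN iffD2])
    then show ?case by (subst AE_stream_space) auto
  qed
  then show ?thesis by (simp add: AE_all_countable)
qed

lemma AE_fair_schedule:
  "AE s in stream_space (measure_pmf (pmf_of_set {..<n})). fair_schedule n s"
proof -
  have "AE s in stream_space (measure_pmf (pmf_of_set {..<n})). \<forall>t0. \<exists>t\<ge>t0. s !! t \<in> {i}"
    if "i < n" for i
  proof (rule prob_space.AE_stream_space_infinitely_often)
    have "{..<n} \<noteq> {}" using that by auto
    then show "measure_pmf.prob (pmf_of_set {..<n}) {i} \<noteq> 0"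
      using that by (simp add: measure_pmf_single)
  qed (simp_all add: prob_space_measure_pmf)
  then show ?thesis
    unfolding fair_schedule_def by (subst AE_all_countable) (auto intro: AE_I2 eventually_mono)
qed

lemma (in pair_sigma_finite) AE_pair_measure_snd:
  assumes [measurable]: "Measurable.pred M2 P" and "AE y in M2. P y"
  shows "AE z in M1 \<Otimes>\<^sub>M M2. P (snd z)"
  using assms(2) by (intro AE_pair_measure) (auto intro: AE_I2)

theorem lemma7:
  fixes n k :: nat and R C F :: "nat set"
  assumes "R \<union> C \<union> F = {..<n}"
    and "R \<inter> C = {}" and "R \<inter> F = {}" and "C \<inter> F = {}"
    and "card F \<ge> 2"
    and "card C < k" and "k \<le> n - card R"
  shows "AE \<omega> in game_space n F.
           (\<forall>t. ones n (opinions n R C (fst \<omega>) (snd \<omega>) t) < k) \<longrightarrow>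
           (let x = opinions n R C (fst \<omega>) (snd \<omega>);
                T = Inf (stable_times n x)
            in stable_times n x \<noteq> {} \<and> (\<forall>i\<in>F. \<not> x T i))"
proof -
  have "F \<noteq> {}" using assms(5) by auto
  interpret pair_prob_space "PiM F (\<lambda>_. measure_pmf (bernoulli_pmf (1/2)))"
      "stream_space (measure_pmf (pmf_of_set {..<n}))"
    by (intro pair_prob_space.intro pair_sigma_finite.intro prob_space_imp_sigma_finite
        prob_space_PiM prob_space_measure_pmf prob_space.prob_space_stream_space)
  have "AE \<omega> in game_space n F. fair_schedule n (snd \<omega>)"
    unfolding game_space_def
    by (rule AE_pair_measure_snd[OF _ AE_fair_schedule]) (unfold fair_schedule_def, measurable)
  then show ?thesis
  proof (rule eventually_mono, intro impI)
    fix \<omega> :: "(nat \<Rightarrow> bool) \<times> nat stream"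
    assume fair: "fair_schedule n (snd \<omega>)"
      and undecided: "\<forall>t. ones n (opinions n R C (fst \<omega>) (snd \<omega>) t) < k"
    interpret majority_game n R C F "fst \<omega>" "snd \<omega>"
      using assms(1-4) by unfold_locales
    show "let x = opinions n R C (fst \<omega>) (snd \<omega>); T = Inf (stable_times n x)
          in stable_times n x \<noteq> {} \<and> (\<forall>i\<in>F. \<not> x T i)"
      unfolding Let_def using undecided assms(7)
      by (intro followers_reject_when_undecided fair \<open>F \<noteq> {}\<close>) (meson order_less_le_trans)
  qed
qed

end
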